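(* Let $(t_j^i)_{0\le j\le i}$ be real numbers and let $h_{j,k}^i$ ($0\le k\le i$, $0\le j\le i-k$) be defined by $h_{j,0}^i=t_j^i$ and $h_{j,k}^i=h_{j,k-1}^{i-1}+h_{j,k-1}^{i}+h_{j+1,k-1}^{i}$ for $k\ge 1$. Suppose that $t^i_{j}=t^{i-1}_{j-1}+t^{i-1}_{j}$ whenever $i\ge 2$ and $1\leq j\leq i-1$. Then for any $i,j,k$ with $0\leq k+2 \leq i$ and $1\leq j \leq i-1-k$, $$h^i_{j,k}=h^{i-1}_{j-1,k}+h^{i-1}_{j,k}.$$ *)

theory Defs
  imports Main "HOL.Real"
begin

text \<open>t i j stands for t^i_j; hh t i j k stands for h^i_{j,k}.
  The recursion is only meaningful for 0 <= k <= i, 0 <= j <= i-k; outside this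
  range the values are irrelevant (never used by in-range entries).\<close>

fun hh :: "(nat \<Rightarrow> nat \<Rightarrow> real) \<Rightarrow> nat \<Rightarrow> nat \<Rightarrow> nat \<Rightarrow> real" where
  "hh t i j 0 = t i j"
| "hh t i j (Suc k) = hh t (i - 1) j k + hh t i j k + hh t i (j + 1) k"

end

theory Submission
  imports Defs
begin

text \<open>Each step of the recursion for h only combines entries of rows i - 1 and i, so adding the
  Pascal relations at level k for the three entries from which h^i_{j,k+1} is built gives the
  relation at level k + 1. Induction on k thus reduces everything to the hypothesis on t.\<close>

lemma hh_Suc_pascal:
  assumes "1 \<le> j"
    and "hh t (i - 1) j k = hh t (i - 1 - 1) (j - 1) k + hh t (i - 1 - 1) j k"
    and "hh t i j k = hh t (i - 1) (j - 1) k + hh t (i - 1) j k"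
    and "hh t i (j + 1) k = hh t (i - 1) j k + hh t (i - 1) (j + 1) k"
  shows "hh t i j (Suc k) = hh t (i - 1) (j - 1) (Suc k) + hh t (i - 1) j (Suc k)"
proof -
  have "j - 1 + 1 = j" using \<open>1 \<le> j\<close> by simp
  then have "hh t (i - 1) (j - 1) (Suc k)
      = hh t (i - 1 - 1) (j - 1) k + hh t (i - 1) (j - 1) k + hh t (i - 1) j k"
    by simp
  moreover have "hh t (i - 1) j (Suc k)
      = hh t (i - 1 - 1) j k + hh t (i - 1) j k + hh t (i - 1) (j + 1) k"
    by simp
  ultimately show ?thesis using assms(2-4) by simp
qed

theorem theorem4:
  fixes t :: "nat \<Rightarrow> nat \<Rightarrow> real"
  assumes "\<And>i j. 2 \<le> i \<Longrightarrow> 1 \<le> j \<Longrightarrow> j \<le> i - 1 \<Longrightarrow>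
             t i j = t (i - 1) (j - 1) + t (i - 1) j"
    and "k + 2 \<le> i" and "1 \<le> j" and "j \<le> i - 1 - k"
  shows "hh t i j k = hh t (i - 1) (j - 1) k + hh t (i - 1) j k"
  using assms(2-4)
proof (induction k arbitrary: i j)
  case 0
  then show ?case using assms(1) by simp
next
  case (Suc k)
  show ?case
  proof (rule hh_Suc_pascal)
    show "hh t (i - 1) j k = hh t (i - 1 - 1) (j - 1) k + hh t (i - 1 - 1) j k"
      using Suc.IH[of "i - 1" j] Suc.prems by simp
    show "hh t i j k = hh t (i - 1) (j - 1) k + hh t (i - 1) j k"
      using Suc.IH[of i j] Suc.prems by simp
    show "hh t i (j + 1) k = hh t (i - 1) j k + hh t (i - 1) (j + 1) k"
      using Suc.IH[of i "j + 1"] Suc.prems by simp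
  qed (use Suc.prems in simp)
qed

end
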